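(* Let $\lambda>1$, $b\ge 0$, and let $(s_n)_{n\ge0}\subset[0,1)$, $(s'_n)_{n\ge0}\subset(0,1]$, $(r_n)_{n\ge0}\subset\mathbb{R}$. Consider the planar system $$x_{n+1}=s_nx_n+s'_ny_n,\qquad y_{n+1}=x_n^{\lambda}e^{r_n-bx_{n+1}-x_n},\qquad n\ge0,$$ with $(x_0,y_0)\in[0,\infty)^2$. Put $a_n=r_{n-1}+\ln s'_n$ for $n\ge1$, and assume $s\doteq\sup_n s_n<1$, $A\doteq\sup_{n\ge1}a_n<\infty$, $\inf_n s'_n>0$. If $A<\ln(1-s)+(\lambda-1)[1-\ln(\lambda-1)]$, then every orbit $\{(x_n,y_n)\}$ with $(x_0,y_0)\in[0,\infty)^2$ converges to $(0,0)$. *)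

theory Defs
  imports "HOL-Analysis.Analysis"
begin

end

theory Submission
  imports Defs
begin

text \<open>Writing \<open>k = \<lambda> - 1\<close>, the function \<open>u \<mapsto> u powr k * exp (-u)\<close> attains its
  maximum at \<open>u = k\<close>, so the nonlinear term \<open>s'\<^sub>n\<^sub>+\<^sub>1 y\<^sub>n\<^sub>+\<^sub>1\<close> is at most
  \<open>exp A * k powr k * exp (-k) * x\<^sub>n\<close>. Eliminating \<open>y\<close> therefore yields the linear inequality
  \<open>x\<^sub>n\<^sub>+\<^sub>2 \<le> s x\<^sub>n\<^sub>+\<^sub>1 + exp A * k powr k * exp (-k) * x\<^sub>n\<close>, and the hypothesis on \<open>A\<close> says
  precisely that its two coefficients sum to less than \<open>1\<close>. Hence \<open>x\<^sub>n\<close> decays geometrically,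
  and \<open>y\<^sub>n \<le> x\<^sub>n\<^sub>+\<^sub>1 / inf s'\<close> follows it to \<open>0\<close>.\<close>

lemma powr_mult_exp_minus_le:
  fixes u k :: real
  assumes "u \<ge> 0" and "k > 0"
  shows "u powr k * exp (- u) \<le> k powr k * exp (- k)"
proof (cases "u = 0")
  case True
  then show ?thesis using assms by simp
next
  case False
  with assms have u: "u > 0" by simp
  have "ln (u / k) \<le> u / k - 1" using u assms by (intro ln_le_minus_one) simp
  then have "k * (ln u - ln k) \<le> k * (u / k - 1)"
    using u assms by (intro mult_left_mono) (auto simp: ln_div)
  then have "k * ln u - u \<le> k * ln k - k" using assms by (simp add: algebra_simps)
  then have "exp (k * ln u - u) \<le> exp (k * ln k - k)" by simp
  then show ?thesis using u assms by (simp add: powr_def exp_diff exp_minus field_simps)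
qed

lemma powr_mult_exp_le_linear:
  fixes u a lam :: real
  assumes "u \<ge> 0" and "lam > 1"
  shows "u powr lam * exp (a - u) \<le> exp a * ((lam - 1) powr (lam - 1) * exp (- (lam - 1))) * u"
proof (cases "u = 0")
  case True
  then show ?thesis by simp
next
  case False
  with assms have "u powr lam = u * u powr (lam - 1)"
    using powr_add[of u 1 "lam - 1"] by simp
  then have "u powr lam * exp (a - u) = exp a * (u powr (lam - 1) * exp (- u)) * u"
    by (simp add: exp_diff exp_minus field_simps)
  also have "\<dots> \<le> exp a * ((lam - 1) powr (lam - 1) * exp (- (lam - 1))) * u"
    using powr_mult_exp_minus_le[of u "lam - 1"] assms by (intro mult_right_mono) auto
  finally show ?thesis .
qed

lemma exp_mult_powr_exp_less:
  fixes A s k :: real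
  assumes "A < ln (1 - s) + k * (1 - ln k)" and "s < 1" and "k > 0"
  shows "exp A * (k powr k * exp (- k)) < 1 - s"
proof -
  have "exp A < exp (ln (1 - s) + k * (1 - ln k))" using assms(1) by simp
  also have "\<dots> = (1 - s) / (k powr k * exp (- k))"
    using assms by (simp add: exp_add exp_diff exp_minus powr_def field_simps)
  finally show ?thesis using assms(3) by (simp add: field_simps)
qed

lemma two_step_contraction_tendsto_zero:
  fixes m :: "nat \<Rightarrow> real" and q :: real
  assumes nonneg: "\<And>n. m n \<ge> 0" and antimono: "\<And>n. m (Suc n) \<le> m n"
    and contract: "\<And>n. m (Suc (Suc n)) \<le> q * m n" and q: "0 < q" "q < 1"
  shows "m \<longlonglongrightarrow> 0"
proof -
  define p where "p = sqrt q"
  have p: "0 < p" "p < 1" "p * p = q" using q by (auto simp: p_def)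
  have bound: "m n * p \<le> m 0 * p ^ n" for n
  proof (induction n rule: nat_less_induct)
    case (1 n)
    consider "n = 0" | "n = 1" | j where "n = Suc (Suc j)"
      by (metis One_nat_def not0_implies_Suc)
    then show ?case
    proof cases
      case 1
      then show ?thesis using p nonneg[of 0] by (simp add: mult_left_le)
    next
      case 2
      then show ?thesis using p antimono[of 0] by (simp add: mult_right_mono)
    next
      case (3 j)
      have "m n * p \<le> q * (m j * p)"
        using 3 contract[of j] p by (simp add: mult_right_mono mult.assoc)
      also have "\<dots> \<le> q * (m 0 * p ^ j)"
        using 1 3 q by (intro mult_left_mono) auto
      also have "\<dots> = m 0 * p ^ n" using 3 p by (simp add: algebra_simps)
      finally show ?thesis .
    qed
  qed
  have "(\<lambda>n. m 0 / p * p ^ n) \<longlonglongrightarrow> 0"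
    using p by (intro tendsto_mult_right_zero LIMSEQ_power_zero) simp
  moreover have "m n \<le> m 0 / p * p ^ n" for n
    using bound[of n] p by (simp add: field_simps)
  ultimately show ?thesis using nonneg by (intro tendsto_sandwich[of "\<lambda>_. 0" m]) auto
qed

lemma second_order_recurrence_tendsto_zero:
  fixes x :: "nat \<Rightarrow> real" and \<alpha> \<beta> :: real
  assumes nonneg: "\<And>n. x n \<ge> 0"
    and rec: "\<And>n. x (Suc (Suc n)) \<le> \<alpha> * x (Suc n) + \<beta> * x n"
    and coeffs: "\<alpha> \<ge> 0" "\<beta> \<ge> 0" "\<alpha> + \<beta> < 1"
  shows "x \<longlonglongrightarrow> 0"
proof -
  define m where "m n = max (x (Suc n)) (x n)" for n
  define q where "q = max (\<alpha> + \<beta>) (1 / 2)"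
  have q: "0 < q" "q < 1" using coeffs by (auto simp: q_def)
  have m_nonneg: "m n \<ge> 0" for n using nonneg by (simp add: m_def le_max_iff_disj)
  have x_le_m: "x n \<le> m n" "x (Suc n) \<le> m n" for n by (auto simp: m_def)
  have next_le: "x (Suc (Suc n)) \<le> q * m n" for n
  proof -
    have "\<alpha> * x (Suc n) + \<beta> * x n \<le> \<alpha> * m n + \<beta> * m n"
      using coeffs x_le_m by (intro add_mono mult_left_mono) auto
    also have "\<dots> = (\<alpha> + \<beta>) * m n" by (simp add: distrib_right)
    also have "\<dots> \<le> q * m n" using m_nonneg by (intro mult_right_mono) (auto simp: q_def)
    finally show ?thesis using rec[of n] by simp
  qed
  have next_le_m: "x (Suc (Suc n)) \<le> m n" for n
    using next_le[of n] mult_right_mono[of q 1 "m n"] q m_nonneg[of n] by linarith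
  have antimono: "m (Suc n) \<le> m n" for n
    unfolding m_def[of "Suc n"] using next_le_m[of n] x_le_m[of n] by simp
  have "m (Suc (Suc n)) \<le> q * m n" for n
  proof -
    have "x (Suc (Suc (Suc n))) \<le> q * m n"
      using next_le[of "Suc n"] mult_left_mono[OF antimono[of n], of q] q by linarith
    then show ?thesis unfolding m_def[of "Suc (Suc n)"] using next_le[of n] by simp
  qed
  then have "m \<longlonglongrightarrow> 0"
    using two_step_contraction_tendsto_zero[of m q] m_nonneg antimono q by simp
  then show ?thesis using nonneg x_le_m by (intro tendsto_sandwich[of "\<lambda>_. 0" x _ m]) auto
qed

lemma tendsto_zero_if_scaled_le_next:
  fixes x y :: "nat \<Rightarrow> real" and c :: real
  assumes "x \<longlonglongrightarrow> 0" and "c > 0"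
    and "\<And>n. y n \<ge> 0" and "\<And>n. c * y n \<le> x (Suc n)"
  shows "y \<longlonglongrightarrow> 0"
proof (rule tendsto_sandwich[of "\<lambda>_. 0" y _ "\<lambda>n. x (Suc n) / c"])
  show "(\<lambda>n. x (Suc n) / c) \<longlonglongrightarrow> 0"
    using LIMSEQ_Suc[OF assms(1)] by (rule tendsto_divide_zero)
qed (use assms in \<open>auto simp: field_simps\<close>)

theorem mainTheorem2:
  fixes lam b :: real and s s' r x y :: "nat \<Rightarrow> real"
  assumes lam: "lam > 1" and b: "b \<ge> 0"
    and s_range: "\<And>n. s n \<in> {0..<1}"
    and s'_range: "\<And>n. s' n \<in> {0<..1}"
    and sup_s: "(SUP n. s n) < 1"
    and A_bdd: "bdd_above ((\<lambda>n. r (n - 1) + ln (s' n)) ` {1..})"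
    and inf_s': "(INF n. s' n) > 0"
    and A_bound: "(SUP n\<in>{1..}. r (n - 1) + ln (s' n))
                    < ln (1 - (SUP n. s n)) + (lam - 1) * (1 - ln (lam - 1))"
    and x0: "x 0 \<ge> 0" and y0: "y 0 \<ge> 0"
    and x_rec: "\<And>n. x (Suc n) = s n * x n + s' n * y n"
    and y_rec: "\<And>n. y (Suc n) = x n powr lam * exp (r n - b * x (Suc n) - x n)"
  shows "x \<longlonglongrightarrow> 0 \<and> y \<longlonglongrightarrow> 0"
proof -
  define S where "S = (SUP n. s n)"
  define A where "A = (SUP n\<in>{1..}. r (n - 1) + ln (s' n))"
  define c where "c = exp A * ((lam - 1) powr (lam - 1) * exp (- (lam - 1)))"
  have "bdd_above (range s)" using s_range by (auto intro!: bdd_aboveI[of _ 1] less_imp_le)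
  from cSUP_upper[OF _ this] have s_le: "s n \<le> S" for n by (simp add: S_def)
  have a_le: "r n + ln (s' (Suc n)) \<le> A" for n
    using cSUP_upper[OF _ A_bdd, of "Suc n"] by (simp add: A_def)
  have "bdd_below (range s')" using s'_range by (auto intro!: bdd_belowI[of _ 0] less_imp_le)
  from cINF_lower[OF this] have s'_ge: "(INF n. s' n) \<le> s' n" for n by simp
  have nonneg: "x n \<ge> 0 \<and> y n \<ge> 0" for n
  proof (induction n)
    case (Suc n)
    have "s n \<ge> 0" "s' n \<ge> 0" using s_range[of n] s'_range[of n] by auto
    then show ?case using Suc x_rec[of n] y_rec[of n] by simp
  qed (use x0 y0 in simp)
  have "x (Suc (Suc n)) \<le> S * x (Suc n) + c * x n" for n
  proof -
    have "s' (Suc n) * y (Suc n) = x n powr lam * exp (r n + ln (s' (Suc n)) - b * x (Suc n) - x n)"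
      using s'_range[of "Suc n"] y_rec[of n] by (simp add: exp_add exp_diff)
    also have "\<dots> \<le> x n powr lam * exp (A - x n)"
      using a_le[of n] mult_nonneg_nonneg[OF b, of "x (Suc n)"] nonneg by (intro mult_left_mono) auto
    also have "\<dots> \<le> c * x n"
      unfolding c_def using powr_mult_exp_le_linear[of "x n" lam A] nonneg lam by simp
    finally show ?thesis
      using x_rec[of "Suc n"] s_le[of "Suc n"] nonneg by (simp add: add_mono mult_right_mono)
  qed
  moreover have "c < 1 - S"
    unfolding c_def S_def A_def by (rule exp_mult_powr_exp_less) (use A_bound sup_s lam in auto)
  moreover have "S \<ge> 0" "c \<ge> 0" using s_le[of 0] s_range[of 0] by (auto simp: c_def)
  ultimately have x_lim: "x \<longlonglongrightarrow> 0"
    using second_order_recurrence_tendsto_zero[of x S c] nonneg by simp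
  have "(INF n. s' n) * y n \<le> x (Suc n)" for n
  proof -
    have "(INF n. s' n) * y n \<le> s' n * y n" using s'_ge nonneg by (intro mult_right_mono) auto
    also have "\<dots> \<le> x (Suc n)" using x_rec[of n] s_range[of n] nonneg by simp
    finally show ?thesis .
  qed
  then have "y \<longlonglongrightarrow> 0"
    using tendsto_zero_if_scaled_le_next[OF x_lim inf_s'] nonneg by blast
  with x_lim show ?thesis ..
qed

end
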